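(* Let $\mathscr M\subset ba(\mathcal A)$ and $\mathcal L(\mathscr M)=\{\nu\in ba(\mathcal A):\nu\ll m\text{ for some }m\in\mathbf A(\mathscr M)\}$. Then $\mathcal L(\mathscr M)=(\mathscr M^\perp)^\perp$, where for $\mathscr N\subset ba(\mathcal A)$, $\mathscr N^\perp=\{\nu\in ba(\mathcal A):\nu\perp\mu\text{ for all }\mu\in\mathscr N\}$.
   Context: $\Omega$ is a set, $\mathcal A$ an algebra of subsets of $\Omega$, $ba(\mathcal A)$ the Banach lattice of bounded finitely additive real set functions on $\mathcal A$ with norm $\|\mu\|=|\mu|(\Omega)$, $|\mu|$ the total variation. For $\lambda,\mu\in ba(\mathcal A)$: $\mu\ll\lambda$ means for every $\varepsilon>0$ there is $\delta>0$ with $|\lambda|(A)<\delta\Rightarrow|\mu|(A)<\varepsilon$; $\mu\perp\lambda$ means for every $\varepsilon>0$ there is $A\in\mathcal A$ with $|\mu|(A)+|\lambda|(A^c)<\varepsilon$. $\mathbf A(\mathscr M)=\{\sum_n\alpha_n\frac{|\mu_n|}{1\vee\|\mu_n\|}:\mu_n\in\mathscr M,\ \alpha_n\ge0,\ \sum_n\alpha_n=1\}$. *)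

theory Defs
  imports "HOL-Analysis.Analysis"
begin

text \<open>Set functions are total functions on 'a set; members of ba are required to vanish
  outside the algebra, so that ba is a faithful copy of the space of bounded finitely
  additive set functions on the algebra.\<close>

definition ba :: "'a set \<Rightarrow> 'a set set \<Rightarrow> ('a set \<Rightarrow> real) set" where
  "ba \<Omega> \<A> = {\<mu>.
     (\<forall>A\<in>\<A>. \<forall>B\<in>\<A>. A \<inter> B = {} \<longrightarrow> \<mu> (A \<union> B) = \<mu> A + \<mu> B)
   \<and> (\<exists>c. \<forall>A\<in>\<A>. \<bar>\<mu> A\<bar> \<le> c)
   \<and> (\<forall>A. A \<notin> \<A> \<longrightarrow> \<mu> A = 0)}"

definition tv :: "'a set set \<Rightarrow> ('a set \<Rightarrow> real) \<Rightarrow> 'a set \<Rightarrow> real" where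
  "tv \<A> \<mu> A = (if A \<in> \<A> then
     (SUP P \<in> {P. finite P \<and> P \<subseteq> \<A> \<and> disjoint P \<and> \<Union>P = A}. \<Sum>B\<in>P. \<bar>\<mu> B\<bar>)
   else 0)"

definition ba_norm :: "'a set \<Rightarrow> 'a set set \<Rightarrow> ('a set \<Rightarrow> real) \<Rightarrow> real" where
  "ba_norm \<Omega> \<A> \<mu> = tv \<A> \<mu> \<Omega>"

definition abs_cont :: "'a set set \<Rightarrow> ('a set \<Rightarrow> real) \<Rightarrow> ('a set \<Rightarrow> real) \<Rightarrow> bool" where
  "abs_cont \<A> \<mu> lam \<longleftrightarrow>
     (\<forall>\<epsilon>>0. \<exists>\<delta>>0. \<forall>A\<in>\<A>. tv \<A> lam A < \<delta> \<longrightarrow> tv \<A> \<mu> A < \<epsilon>)"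

definition singular :: "'a set \<Rightarrow> 'a set set \<Rightarrow> ('a set \<Rightarrow> real) \<Rightarrow> ('a set \<Rightarrow> real) \<Rightarrow> bool" where
  "singular \<Omega> \<A> \<mu> lam \<longleftrightarrow>
     (\<forall>\<epsilon>>0. \<exists>A\<in>\<A>. tv \<A> \<mu> A + tv \<A> lam (\<Omega> - A) < \<epsilon>)"

definition convA :: "'a set \<Rightarrow> 'a set set \<Rightarrow> ('a set \<Rightarrow> real) set \<Rightarrow> ('a set \<Rightarrow> real) set" where
  "convA \<Omega> \<A> M = {m. \<exists>(\<mu>::nat \<Rightarrow> 'a set \<Rightarrow> real) (\<alpha>::nat \<Rightarrow> real).
     (\<forall>n. \<mu> n \<in> M) \<and> (\<forall>n. \<alpha> n \<ge> 0) \<and> \<alpha> sums 1 \<and>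
     m = (\<lambda>A. \<Sum>n. \<alpha> n * (tv \<A> (\<mu> n) A / max 1 (ba_norm \<Omega> \<A> (\<mu> n))))}"

definition Lset :: "'a set \<Rightarrow> 'a set set \<Rightarrow> ('a set \<Rightarrow> real) set \<Rightarrow> ('a set \<Rightarrow> real) set" where
  "Lset \<Omega> \<A> M = {\<nu> \<in> ba \<Omega> \<A>. \<exists>m\<in>convA \<Omega> \<A> M. abs_cont \<A> \<nu> m}"

definition perp :: "'a set \<Rightarrow> 'a set set \<Rightarrow> ('a set \<Rightarrow> real) set \<Rightarrow> ('a set \<Rightarrow> real) set" where
  "perp \<Omega> \<A> N = {\<nu> \<in> ba \<Omega> \<A>. \<forall>\<mu>\<in>N. singular \<Omega> \<A> \<nu> \<mu>}"

end

theory Submission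
  imports Defs
begin

text \<open>
  Inclusion L(\<M>) \<subseteq> perp (perp \<M>): a function singular to every member of \<M> is (one-sidedly)
  singular to every countable convex combination m of their normalised variations, and
  absolute continuity with respect to m transfers this to \<nu>.

  Inclusion perp (perp \<M>) \<subseteq> L(\<M>): for v = |\<nu>| and m \<in> A(\<M>) we form the part of v concentrated
  on m-small sets, \<rho>(A) = inf over d > 0 of sup {v B | B \<subseteq> A, m B < d}.  It is finitely
  additive, below v, and v - \<rho> is m-continuous.  Since A(\<M>) is closed under countable convex
  combinations, some m minimises \<rho>(\<Omega>); minimality forces \<rho> to be singular to each member
  of \<M>, hence \<nu> \<perp> \<rho>, hence \<rho> = 0, i.e. \<nu> \<ll> m.
\<close>

lemma nonneg_double_series_sums:
  fixes f :: "nat \<times> nat \<Rightarrow> real"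
  assumes nn: "\<And>x. 0 \<le> f x" and rows: "\<And>k. (\<lambda>n. f (k, n)) sums a k" and total: "a sums t"
  shows "(\<lambda>j. f (prod_decode j)) sums t"
proof -
  have rows': "((\<lambda>n. f (k, n)) has_sum a k) UNIV" for k
    by (rule sums_nonneg_imp_has_sum[OF rows]) (simp add: nn)
  have a_nonneg: "0 \<le> a k" for k
    using rows[of k] suminf_nonneg[of "\<lambda>n. f (k, n)"] nn by (simp add: sums_iff)
  have total': "(a has_sum t) UNIV" by (rule sums_nonneg_imp_has_sum[OF total a_nonneg])
  have "f summable_on Sigma UNIV (\<lambda>_. UNIV)"
    by (rule summable_on_SigmaI[OF rows' has_sum_imp_summable[OF total'] nn])
  then have "(f has_sum t) UNIV"
    using has_sum_SigmaI[OF rows' total'] by simp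
  then have "((\<lambda>j. f (prod_decode j)) has_sum t) UNIV"
    using has_sum_reindex_bij_betw[of prod_decode UNIV UNIV f t] bij_prod_decode by simp
  then show ?thesis by (rule has_sum_imp_sums)
qed

lemma convex_series_bounds:
  fixes \<alpha> :: "nat \<Rightarrow> real" and h :: "nat \<Rightarrow> real"
  assumes \<alpha>: "\<And>n. 0 \<le> \<alpha> n" "\<alpha> sums 1" and h: "\<And>n. 0 \<le> h n" "\<And>n. h n \<le> 1"
  shows "summable (\<lambda>n. \<alpha> n * h n)" and "0 \<le> (\<Sum>n. \<alpha> n * h n)" and "(\<Sum>n. \<alpha> n * h n) \<le> 1"
    and "\<alpha> k * h k \<le> (\<Sum>n. \<alpha> n * h n)"
    and "(\<Sum>n. \<alpha> n * h n) \<le> 1 - (\<Sum>n<N. \<alpha> n) + (\<Sum>n<N. \<alpha> n * h n)"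
proof -
  have sa: "summable \<alpha>" using \<alpha>(2) by (rule sums_summable)
  show sm: "summable (\<lambda>n. \<alpha> n * h n)"
    by (rule summable_comparison_test[OF _ sa])
       (auto intro!: exI[of _ 0] mult_left_le simp: \<alpha> h abs_mult)
  show "0 \<le> (\<Sum>n. \<alpha> n * h n)" by (rule suminf_nonneg[OF sm]) (simp add: \<alpha> h)
  have "(\<Sum>n. \<alpha> n * h n) \<le> (\<Sum>n. \<alpha> n)"
    by (rule suminf_le[OF _ sm sa]) (auto intro: mult_left_le simp: \<alpha> h)
  then show "(\<Sum>n. \<alpha> n * h n) \<le> 1" using \<alpha>(2) by (simp add: sums_iff)
  show "\<alpha> k * h k \<le> (\<Sum>n. \<alpha> n * h n)"
    using sum_le_suminf[OF sm, of "{k}"] \<alpha> h by simp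
  have "(\<Sum>n. \<alpha> n * h n) = (\<Sum>n. \<alpha> (n + N) * h (n + N)) + (\<Sum>n<N. \<alpha> n * h n)"
    by (rule suminf_split_initial_segment[OF sm])
  also have "(\<Sum>n. \<alpha> (n + N) * h (n + N)) \<le> (\<Sum>n. \<alpha> (n + N))"
    by (rule suminf_le)
       (auto intro: mult_left_le simp: \<alpha> h summable_ignore_initial_segment[OF sm]
          summable_ignore_initial_segment[OF sa] sa)
  also have "(\<Sum>n. \<alpha> (n + N)) = 1 - (\<Sum>n<N. \<alpha> n)"
    using suminf_minus_initial_segment[OF sa, of N] \<alpha>(2) by (simp add: sums_iff)
  finally show "(\<Sum>n. \<alpha> n * h n) \<le> 1 - (\<Sum>n<N. \<alpha> n) + (\<Sum>n<N. \<alpha> n * h n)" by simp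
qed

definition bounded_on :: "'a set set \<Rightarrow> ('a set \<Rightarrow> real) \<Rightarrow> bool" where
  "bounded_on M \<mu> \<longleftrightarrow> (\<exists>c. \<forall>A\<in>M. \<bar>\<mu> A\<bar> \<le> c)"

lemma ba_iff:
  "\<mu> \<in> ba \<Omega> M \<longleftrightarrow> additive M \<mu> \<and> bounded_on M \<mu> \<and> (\<forall>A. A \<notin> M \<longrightarrow> \<mu> A = 0)"
  unfolding ba_def additive_def bounded_on_def by blast

lemma bounded_onE:
  assumes "bounded_on M \<mu>"
  obtains c where "\<And>A. A \<in> M \<Longrightarrow> \<bar>\<mu> A\<bar> \<le> c"
  using assms unfolding bounded_on_def by blast

lemma bounded_on_bdd_above: "bounded_on M \<mu> \<Longrightarrow> bdd_above (\<mu> ` {B\<in>M. P B})"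
  by (auto elim!: bounded_onE simp: bdd_above_def dest: abs_le_D1)

context algebra
begin

lemma additive_empty: "additive M (\<mu> :: 'a set \<Rightarrow> real) \<Longrightarrow> \<mu> {} = 0"
  using additiveD[of M \<mu> "{}" "{}"] by simp

lemma additive_diff:
  "additive M (\<mu> :: 'a set \<Rightarrow> real) \<Longrightarrow> A \<in> M \<Longrightarrow> B \<in> M \<Longrightarrow> B \<subseteq> A \<Longrightarrow>
    \<mu> A = \<mu> B + \<mu> (A - B)"
  using additiveD[of M \<mu> B "A - B"] by (simp add: Un_absorb1 Diff)

lemma additive_compl:
  "additive M (\<mu> :: 'a set \<Rightarrow> real) \<Longrightarrow> A \<in> M \<Longrightarrow> \<mu> \<Omega> = \<mu> A + \<mu> (\<Omega> - A)"
  using additive_diff[of \<mu> \<Omega> A] sets_into_space by auto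

lemma additive_mono:
  assumes "additive M (\<mu> :: 'a set \<Rightarrow> real)" "\<And>A. A \<in> M \<Longrightarrow> 0 \<le> \<mu> A" "A \<in> M" "B \<in> M" "B \<subseteq> A"
  shows "\<mu> B \<le> \<mu> A"
  using additive_diff[OF assms(1,3-5)] assms(2)[of "A - B"] assms(3,4) by auto

lemma additive_finite_union:
  assumes ad: "additive M (\<mu> :: 'a set \<Rightarrow> real)" and P: "finite P" "P \<subseteq> M" "disjoint P"
  shows "\<mu> (\<Union>P) = (\<Sum>p\<in>P. \<mu> p)"
  using P
proof (induction P rule: finite_induct)
  case empty
  then show ?case using additive_empty[OF ad] by simp
next
  case (insert p F)
  have "p \<inter> \<Union>F = {}" using insert.prems(2) insert.hyps(2)
    by (auto simp: pairwise_insert disjnt_def)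
  moreover have "\<Union>F \<in> M" using insert by auto
  ultimately have "\<mu> (\<Union>(insert p F)) = \<mu> p + \<mu> (\<Union>F)"
    using additiveD[OF ad] insert.prems by auto
  then show ?case using insert by (simp add: pairwise_insert)
qed

subsection \<open>Positive variation and the Jordan formula\<close>

definition pos_var :: "('a set \<Rightarrow> real) \<Rightarrow> 'a set \<Rightarrow> real" where
  "pos_var \<mu> A = (SUP B\<in>{B\<in>M. B \<subseteq> A}. \<mu> B)"

lemma pos_var_upper: "bounded_on M \<mu> \<Longrightarrow> B \<in> M \<Longrightarrow> B \<subseteq> A \<Longrightarrow> \<mu> B \<le> pos_var \<mu> A"
  unfolding pos_var_def
  by (rule cSUP_upper[OF _ bounded_on_bdd_above]) auto

lemma pos_var_least: "(\<And>B. B \<in> M \<Longrightarrow> B \<subseteq> A \<Longrightarrow> \<mu> B \<le> c) \<Longrightarrow> pos_var \<mu> A \<le> c"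
  unfolding pos_var_def by (rule cSUP_least) auto

lemma pos_var_nonneg: "additive M \<mu> \<Longrightarrow> bounded_on M \<mu> \<Longrightarrow> 0 \<le> pos_var \<mu> A"
  using pos_var_upper[of \<mu> "{}" A] additive_empty[of \<mu>] by auto

text \<open>The positive variation is finitely additive: split a subset of A1 \<union> A2 along the two
  parts for one inequality, join subsets of A1 and A2 for the other.\<close>

lemma pos_var_additive:
  assumes ad: "additive M \<mu>" and bd: "bounded_on M \<mu>"
  shows "additive M (pos_var \<mu>)"
  unfolding additive_def
proof (intro ballI impI antisym)
  fix A1 A2 assume A: "A1 \<in> M" "A2 \<in> M" "A1 \<inter> A2 = {}"
  show "pos_var \<mu> (A1 \<union> A2) \<le> pos_var \<mu> A1 + pos_var \<mu> A2"
  proof (rule pos_var_least)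
    fix B assume B: "B \<in> M" "B \<subseteq> A1 \<union> A2"
    have "\<mu> B = \<mu> (B \<inter> A1) + \<mu> (B \<inter> A2)"
      using additiveD[OF ad, of "B \<inter> A1" "B \<inter> A2"] A B by (auto simp: Int_Un_distrib[symmetric] Int_absorb2)
    also have "\<dots> \<le> pos_var \<mu> A1 + pos_var \<mu> A2"
      by (intro add_mono pos_var_upper[OF bd]) (use A B in auto)
    finally show "\<mu> B \<le> pos_var \<mu> A1 + pos_var \<mu> A2" .
  qed
  have "pos_var \<mu> A1 \<le> pos_var \<mu> (A1 \<union> A2) - pos_var \<mu> A2"
  proof (rule pos_var_least)
    fix B1 assume B1: "B1 \<in> M" "B1 \<subseteq> A1"
    have "pos_var \<mu> A2 \<le> pos_var \<mu> (A1 \<union> A2) - \<mu> B1"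
    proof (rule pos_var_least)
      fix B2 assume B2: "B2 \<in> M" "B2 \<subseteq> A2"
      have "B1 \<inter> B2 = {}" using A B1 B2 by blast
      then have "\<mu> B1 + \<mu> B2 = \<mu> (B1 \<union> B2)"
        using additiveD[OF ad, of B1 B2] B1 B2 by simp
      also have "\<dots> \<le> pos_var \<mu> (A1 \<union> A2)"
        by (rule pos_var_upper[OF bd]) (use B1 B2 in auto)
      finally show "\<mu> B2 \<le> pos_var \<mu> (A1 \<union> A2) - \<mu> B1" by simp
    qed
    then show "\<mu> B1 \<le> pos_var \<mu> (A1 \<union> A2) - pos_var \<mu> A2" by simp
  qed
  then show "pos_var \<mu> A1 + pos_var \<mu> A2 \<le> pos_var \<mu> (A1 \<union> A2)" by simp
qed

definition partitions :: "'a set \<Rightarrow> 'a set set set" where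
  "partitions A = {P. finite P \<and> P \<subseteq> M \<and> disjoint P \<and> \<Union>P = A}"

text \<open>Splitting a partition into the pieces of positive and of negative mass bounds its
  variation sum by 2 pos_var - \<mu>.\<close>

lemma partition_sum_bound:
  assumes ad: "additive M \<mu>" and bd: "bounded_on M \<mu>" and P: "P \<in> partitions A"
  shows "(\<Sum>p\<in>P. \<bar>\<mu> p\<bar>) \<le> 2 * pos_var \<mu> A - \<mu> A"
proof -
  define Pp where "Pp = {p\<in>P. \<mu> p \<ge> 0}"
  define Pn where "Pn = {p\<in>P. \<mu> p < 0}"
  have P: "finite P" "P \<subseteq> M" "disjoint P" "\<Union>P = A" using P by (auto simp: partitions_def)
  have fin: "finite Pp" "finite Pn" and sub: "Pp \<subseteq> P" "Pn \<subseteq> P"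
    using P(1) by (auto simp: Pp_def Pn_def)
  have PU: "P = Pp \<union> Pn" "Pp \<inter> Pn = {}" by (auto simp: Pp_def Pn_def)
  have "\<mu> (\<Union>Pp) = (\<Sum>p\<in>Pp. \<mu> p)"
    by (rule additive_finite_union[OF ad fin(1)]) (use P sub in \<open>auto intro: pairwise_subset\<close>)
  also have "\<dots> = (\<Sum>p\<in>Pp. \<bar>\<mu> p\<bar>)" by (rule sum.cong) (auto simp: Pp_def)
  finally have union_p: "\<mu> (\<Union>Pp) = (\<Sum>p\<in>Pp. \<bar>\<mu> p\<bar>)" .
  have "\<mu> (\<Union>Pn) = (\<Sum>p\<in>Pn. \<mu> p)"
    by (rule additive_finite_union[OF ad fin(2)]) (use P sub in \<open>auto intro: pairwise_subset\<close>)
  also have "\<dots> = - (\<Sum>p\<in>Pn. \<bar>\<mu> p\<bar>)"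
    by (subst sum_negf[symmetric], rule sum.cong) (auto simp: Pn_def)
  finally have union_n: "\<mu> (\<Union>Pn) = - (\<Sum>p\<in>Pn. \<bar>\<mu> p\<bar>)" .
  have in_M: "\<Union>Pp \<in> M" "\<Union>Pn \<in> M" using P fin sub by auto
  have "p \<inter> q = {}" if "p \<in> Pp" "q \<in> Pn" for p q
  proof -
    have "p \<noteq> q" "p \<in> P" "q \<in> P" using that by (auto simp: Pp_def Pn_def)
    then show ?thesis using P(3) by (auto simp: pairwise_def disjnt_def)
  qed
  then have "\<Union>Pp \<inter> \<Union>Pn = {}" by blast
  then have "\<mu> A = \<mu> (\<Union>Pp) + \<mu> (\<Union>Pn)"
    using additiveD[OF ad _ in_M] P(4) PU(1) by (metis Union_Un_distrib)
  moreover have "\<mu> (\<Union>Pp) \<le> pos_var \<mu> A"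
    by (rule pos_var_upper[OF bd in_M(1)]) (use P sub in auto)
  moreover have "(\<Sum>p\<in>P. \<bar>\<mu> p\<bar>) = (\<Sum>p\<in>Pp. \<bar>\<mu> p\<bar>) + (\<Sum>p\<in>Pn. \<bar>\<mu> p\<bar>)"
    using PU fin by (simp add: sum.union_disjoint)
  ultimately show ?thesis using union_p union_n by simp
qed

lemma tv_eq_pos_var:
  assumes ad: "additive M \<mu>" and bd: "bounded_on M \<mu>" and A: "A \<in> M"
  shows "tv M \<mu> A = 2 * pos_var \<mu> A - \<mu> A"
proof -
  have tv: "tv M \<mu> A = (SUP P\<in>partitions A. \<Sum>B\<in>P. \<bar>\<mu> B\<bar>)"
    using A by (simp add: tv_def partitions_def)
  have ne: "partitions A \<noteq> {}"
    using A by (auto simp: partitions_def intro!: exI[of _ "{A}"])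
  have bdd: "bdd_above ((\<lambda>P. \<Sum>B\<in>P. \<bar>\<mu> B\<bar>) ` partitions A)"
    using partition_sum_bound[OF ad bd] by (auto simp: bdd_above_def)
  have le: "tv M \<mu> A \<le> 2 * pos_var \<mu> A - \<mu> A"
    unfolding tv by (rule cSUP_least[OF ne]) (use partition_sum_bound[OF ad bd] in auto)
  have "pos_var \<mu> A \<le> (tv M \<mu> A + \<mu> A) / 2"
  proof (rule pos_var_least)
    fix B assume B: "B \<in> M" "B \<subseteq> A"
    have split: "\<mu> A = \<mu> B + \<mu> (A - B)" using additive_diff[OF ad A B] .
    have "2 * \<mu> B - \<mu> A \<le> tv M \<mu> A"
    proof (cases "B = A - B")
      case True
      then have "B = {}" "A = {}" by auto
      then have "2 * \<mu> B - \<mu> A = (\<Sum>C\<in>{A}. \<bar>\<mu> C\<bar>)" using additive_empty[OF ad] by simp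
      also have "\<dots> \<le> tv M \<mu> A" unfolding tv
        by (rule cSUP_upper[OF _ bdd]) (use A in \<open>auto simp: partitions_def\<close>)
      finally show ?thesis .
    next
      case False
      have "2 * \<mu> B - \<mu> A \<le> (\<Sum>C\<in>{B, A - B}. \<bar>\<mu> C\<bar>)"
        using False split by simp
      also have "\<dots> \<le> tv M \<mu> A" unfolding tv
        by (rule cSUP_upper[OF _ bdd])
           (use A B False in \<open>auto simp: partitions_def pairwise_insert disjnt_def\<close>)
      finally show ?thesis .
    qed
    then show "\<mu> B \<le> (tv M \<mu> A + \<mu> A) / 2" by simp
  qed
  with le show ?thesis by simp
qed

lemma tv_outside: "A \<notin> M \<Longrightarrow> tv M \<mu> A = 0"
  by (simp add: tv_def)

lemma tv_nonneg_fun: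
  assumes ad: "additive M f" and bd: "bounded_on M f" and nn: "\<And>A. A \<in> M \<Longrightarrow> 0 \<le> f A"
    and A: "A \<in> M"
  shows "tv M f A = f A"
proof -
  have "pos_var f A = f A"
    using pos_var_least[of A f "f A"] additive_mono[OF ad nn A] pos_var_upper[OF bd A, of A]
    by (auto intro: antisym)
  then show ?thesis using tv_eq_pos_var[OF ad bd A] by simp
qed

context
  fixes \<mu> assumes ad: "additive M \<mu>" and bd: "bounded_on M \<mu>"
begin

lemma abs_le_tv: "A \<in> M \<Longrightarrow> \<bar>\<mu> A\<bar> \<le> tv M \<mu> A"
  using tv_eq_pos_var[OF ad bd, of A] pos_var_upper[OF bd, of A A] pos_var_nonneg[OF ad bd, of A]
  by auto

lemma tv_nonneg: "0 \<le> tv M \<mu> A"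
  using abs_le_tv[of A] tv_outside[of A \<mu>] by (cases "A \<in> M") auto

lemma tv_additive: "additive M (tv M \<mu>)"
  unfolding additive_def
proof (intro ballI impI)
  fix A B assume AB: "A \<in> M" "B \<in> M" "A \<inter> B = {}"
  then show "tv M \<mu> (A \<union> B) = tv M \<mu> A + tv M \<mu> B"
    using tv_eq_pos_var[OF ad bd, of "A \<union> B"] tv_eq_pos_var[OF ad bd, of A]
      tv_eq_pos_var[OF ad bd, of B] additiveD[OF pos_var_additive[OF ad bd] AB(3,1,2)]
      additiveD[OF ad AB(3,1,2)] Un[OF AB(1,2)] by simp
qed

lemma tv_bounded: "bounded_on M (tv M \<mu>)"
proof -
  obtain c where c: "\<And>A. A \<in> M \<Longrightarrow> \<bar>\<mu> A\<bar> \<le> c" using bounded_onE[OF bd] by blast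
  have "\<bar>tv M \<mu> A\<bar> \<le> 3 * c" if "A \<in> M" for A
  proof -
    have "pos_var \<mu> A \<le> c" by (rule pos_var_least) (use c in \<open>auto dest: abs_le_D1\<close>)
    then show ?thesis using tv_eq_pos_var[OF ad bd that] c[OF that] tv_nonneg[of A] by auto
  qed
  then show ?thesis unfolding bounded_on_def by blast
qed

lemma tv_mono: "A \<in> M \<Longrightarrow> B \<in> M \<Longrightarrow> B \<subseteq> A \<Longrightarrow> tv M \<mu> B \<le> tv M \<mu> A"
  by (rule additive_mono[OF tv_additive]) (auto simp: tv_nonneg)

lemma tv_le_norm: "tv M \<mu> A \<le> ba_norm \<Omega> M \<mu>"
  using tv_mono[of \<Omega> A] sets_into_space tv_outside[of A \<mu>] tv_nonneg[of \<Omega>]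
  by (cases "A \<in> M") (auto simp: ba_norm_def)

lemma tv_subadditive: "A \<in> M \<Longrightarrow> B \<in> M \<Longrightarrow> tv M \<mu> (A \<union> B) \<le> tv M \<mu> A + tv M \<mu> B"
  using additiveD[OF tv_additive, of A "B - A"] tv_mono[of B "B - A"] by (simp add: Diff)

end

end

section \<open>The set A(\<M>) of countable convex combinations\<close>

context algebra
begin

definition norm_var :: "('a set \<Rightarrow> real) \<Rightarrow> 'a set \<Rightarrow> real" where
  "norm_var \<mu> A = tv M \<mu> A / max 1 (ba_norm \<Omega> M \<mu>)"

lemma convA_iff:
  "m \<in> convA \<Omega> M \<M> \<longleftrightarrow> (\<exists>\<mu> \<alpha>. (\<forall>n. \<mu> n \<in> \<M>) \<and> (\<forall>n. 0 \<le> \<alpha> n) \<and> \<alpha> sums 1 \<and>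
     m = (\<lambda>A. \<Sum>n. \<alpha> n * norm_var (\<mu> n) A))"
  unfolding convA_def norm_var_def by simp

context
  fixes \<mu> assumes ba: "\<mu> \<in> ba \<Omega> M"
begin

lemma ba_additive: "additive M \<mu>" and ba_bounded: "bounded_on M \<mu>"
  using ba by (auto simp: ba_iff)

lemma norm_var_nonneg: "0 \<le> norm_var \<mu> A"
  unfolding norm_var_def using tv_nonneg[OF ba_additive ba_bounded] by simp

lemma norm_var_le_1: "norm_var \<mu> A \<le> 1"
  unfolding norm_var_def using tv_le_norm[OF ba_additive ba_bounded, of A] by simp

lemma norm_var_le_tv: "norm_var \<mu> A \<le> tv M \<mu> A"
  unfolding norm_var_def using tv_nonneg[OF ba_additive ba_bounded, of A]
  by (simp add: divide_le_eq mult_le_cancel_left1)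

lemma norm_var_additive: "additive M (norm_var \<mu>)"
  using tv_additive[OF ba_additive ba_bounded]
  unfolding additive_def norm_var_def by (simp add: add_divide_distrib)

lemma norm_var_mono: "A \<in> M \<Longrightarrow> B \<in> M \<Longrightarrow> B \<subseteq> A \<Longrightarrow> norm_var \<mu> B \<le> norm_var \<mu> A"
  by (rule additive_mono[OF norm_var_additive]) (auto simp: norm_var_nonneg)

end

lemma convex_series:
  assumes \<alpha>: "\<And>n. 0 \<le> \<alpha> n" "\<alpha> sums 1"
    and h: "\<And>n. additive M (h n)" "\<And>n A. 0 \<le> h n A" "\<And>n A. h n A \<le> 1"
  defines "F \<equiv> \<lambda>A. \<Sum>n. \<alpha> n * h n A"
  shows "additive M F" "\<And>A. A \<in> M \<Longrightarrow> tv M F A = F A"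
proof -
  note bounds = convex_series_bounds[OF \<alpha> h(2,3)]
  show ad: "additive M F" unfolding additive_def F_def
  proof (intro ballI impI)
    fix A B assume AB: "A \<in> M" "B \<in> M" "A \<inter> B = {}"
    have "(\<Sum>n. \<alpha> n * h n (A \<union> B)) = (\<Sum>n. \<alpha> n * h n A + \<alpha> n * h n B)"
      using additiveD[OF h(1) AB(3,1,2)] by (simp add: distrib_left)
    also have "\<dots> = (\<Sum>n. \<alpha> n * h n A) + (\<Sum>n. \<alpha> n * h n B)"
      by (rule suminf_add[OF bounds(1) bounds(1), symmetric])
    finally show "(\<Sum>n. \<alpha> n * h n (A \<union> B)) = (\<Sum>n. \<alpha> n * h n A) + (\<Sum>n. \<alpha> n * h n B)" .
  qed
  have "bounded_on M F"
    unfolding bounded_on_def F_def using bounds(2,3) by (intro exI[of _ 1]) auto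
  then show "tv M F A = F A" if "A \<in> M" for A
    by (rule tv_nonneg_fun[OF ad _ _ that]) (simp add: F_def bounds(2))
qed

context
  fixes \<M> assumes \<M>: "\<M> \<subseteq> ba \<Omega> M"
begin

lemma convA_props:
  assumes m: "m \<in> convA \<Omega> M \<M>"
  shows "additive M m" "\<And>A. 0 \<le> m A" "\<And>A. m A \<le> 1" "\<And>A. A \<in> M \<Longrightarrow> tv M m A = m A"
proof -
  obtain \<mu> \<alpha> where \<mu>: "\<And>n. \<mu> n \<in> \<M>" and \<alpha>: "\<And>n. 0 \<le> \<alpha> n" "\<alpha> sums 1"
    and m_eq: "m = (\<lambda>A. \<Sum>n. \<alpha> n * norm_var (\<mu> n) A)"
    using m unfolding convA_iff by blast
  have ba: "\<mu> n \<in> ba \<Omega> M" for n using \<mu> \<M> by auto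
  show "additive M m" "\<And>A. A \<in> M \<Longrightarrow> tv M m A = m A"
    using convex_series[of \<alpha> "\<lambda>n. norm_var (\<mu> n)", OF \<alpha> norm_var_additive[OF ba]
        norm_var_nonneg[OF ba] norm_var_le_1[OF ba]] unfolding m_eq by auto
  show "0 \<le> m A" "m A \<le> 1" for A
    using convex_series_bounds(2,3)[of \<alpha> "\<lambda>n. norm_var (\<mu> n) A", OF \<alpha> norm_var_nonneg[OF ba]
        norm_var_le_1[OF ba]] unfolding m_eq by auto
qed

lemma convA_single: "\<mu> \<in> \<M> \<Longrightarrow> norm_var \<mu> \<in> convA \<Omega> M \<M>"
  unfolding convA_iff
proof (intro exI conjI)
  let ?\<delta> = "\<lambda>n. if n = 0 then 1 else 0 :: real"
  assume "\<mu> \<in> \<M>"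
  then show "\<forall>n. (\<lambda>_. \<mu>) n \<in> \<M>" by simp
  show "\<forall>n. 0 \<le> ?\<delta> n" by simp
  show "?\<delta> sums 1" using sums_single[of 0 "\<lambda>_. 1::real"] by simp
  have "(\<lambda>n. ?\<delta> n * norm_var \<mu> A) sums norm_var \<mu> A" for A
  proof -
    have eq: "(\<lambda>n. ?\<delta> n * norm_var \<mu> A) = (\<lambda>n. if n = 0 then norm_var \<mu> A else 0)" by auto
    show ?thesis unfolding eq by (rule sums_single)
  qed
  then show "norm_var \<mu> = (\<lambda>A. \<Sum>n. ?\<delta> n * norm_var ((\<lambda>_. \<mu>) n) A)"
    by (simp add: sums_iff)
qed

lemma convA_midpoint:
  assumes m: "m \<in> convA \<Omega> M \<M>" and \<mu>: "\<mu> \<in> \<M>"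
  shows "(\<lambda>A. (m A + norm_var \<mu> A) / 2) \<in> convA \<Omega> M \<M>"
proof -
  obtain \<mu>s \<alpha> where \<mu>s: "\<And>n. \<mu>s n \<in> \<M>" and \<alpha>: "\<And>n. 0 \<le> \<alpha> n" "\<alpha> sums 1"
    and m_eq: "m = (\<lambda>A. \<Sum>n. \<alpha> n * norm_var (\<mu>s n) A)"
    using m unfolding convA_iff by blast
  have ba: "\<mu>s n \<in> ba \<Omega> M" for n using \<mu>s \<M> by auto
  define \<beta> where "\<beta> = case_nat (1/2) (\<lambda>n. \<alpha> n / 2)"
  define \<mu>' where "\<mu>' = case_nat \<mu> \<mu>s"
  show ?thesis unfolding convA_iff
  proof (intro exI conjI)
    show "\<forall>n. \<mu>' n \<in> \<M>" using \<mu>s \<mu> by (auto simp: \<mu>'_def split: nat.split)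
    show "\<forall>n. 0 \<le> \<beta> n" using \<alpha> by (auto simp: \<beta>_def split: nat.split)
    have "(\<lambda>n. \<beta> (Suc n)) sums (1/2)" unfolding \<beta>_def using sums_divide[OF \<alpha>(2), of 2] by simp
    then show "\<beta> sums 1" using sums_Suc_iff[of \<beta> "1/2"] by (simp add: \<beta>_def)
    show "(\<lambda>A. (m A + norm_var \<mu> A) / 2) = (\<lambda>A. \<Sum>n. \<beta> n * norm_var (\<mu>' n) A)"
    proof
      fix A
      have "(\<lambda>n. \<alpha> n * norm_var (\<mu>s n) A) sums m A"
        using convex_series_bounds(1)[of \<alpha> "\<lambda>n. norm_var (\<mu>s n) A", OF \<alpha> norm_var_nonneg[OF ba]
            norm_var_le_1[OF ba]] m_eq by (simp add: summable_sums)
      then have "(\<lambda>n. \<beta> (Suc n) * norm_var (\<mu>' (Suc n)) A) sums (m A / 2)"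
        unfolding \<beta>_def \<mu>'_def using sums_divide[of _ "m A" 2] by simp
      then have "(\<lambda>n. \<beta> n * norm_var (\<mu>' n) A) sums (m A / 2 + norm_var \<mu> A / 2)"
        using sums_Suc_iff[of "\<lambda>n. \<beta> n * norm_var (\<mu>' n) A"] by (simp add: \<beta>_def \<mu>'_def)
      then show "(m A + norm_var \<mu> A) / 2 = (\<Sum>n. \<beta> n * norm_var (\<mu>' n) A)"
        by (simp add: sums_iff add_divide_distrib)
    qed
  qed
qed

lemma convA_seq_representation:
  assumes "\<And>k. mk k \<in> convA \<Omega> M \<M>"
  obtains \<mu>s \<alpha> where "\<And>k n. \<mu>s k n \<in> \<M>" "\<And>k n. 0 \<le> \<alpha> k n" "\<And>k. \<alpha> k sums 1"
    "\<And>k. mk k = (\<lambda>A. \<Sum>n. \<alpha> k n * norm_var (\<mu>s k n) A)"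
proof -
  have "\<forall>k. \<exists>\<mu>s \<alpha>. (\<forall>n. \<mu>s n \<in> \<M>) \<and> (\<forall>n. 0 \<le> \<alpha> n) \<and> \<alpha> sums 1 \<and>
     mk k = (\<lambda>A. \<Sum>n. \<alpha> n * norm_var (\<mu>s n) A)"
    using assms unfolding convA_iff by blast
  from choice[OF this] obtain \<mu>s where "\<forall>k. \<exists>\<alpha>. (\<forall>n. \<mu>s k n \<in> \<M>) \<and> (\<forall>n. 0 \<le> \<alpha> n) \<and>
     \<alpha> sums 1 \<and> mk k = (\<lambda>A. \<Sum>n. \<alpha> n * norm_var (\<mu>s k n) A)"
    by blast
  from choice[OF this] obtain \<alpha> where "\<forall>k. (\<forall>n. \<mu>s k n \<in> \<M>) \<and> (\<forall>n. 0 \<le> \<alpha> k n) \<and>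
     \<alpha> k sums 1 \<and> mk k = (\<lambda>A. \<Sum>n. \<alpha> k n * norm_var (\<mu>s k n) A)"
    by blast
  then show ?thesis by (intro that[of \<mu>s \<alpha>]) auto
qed

text \<open>A(\<M>) is closed under countable convex combinations: the double series is
  re-enumerated along the Cantor pairing.\<close>

lemma convA_countable:
  assumes mk: "\<And>k. mk k \<in> convA \<Omega> M \<M>" and c: "\<And>k. 0 \<le> c k" "c sums 1"
  shows "(\<lambda>A. \<Sum>k. c k * mk k A) \<in> convA \<Omega> M \<M>"
proof -
  obtain \<mu>s \<alpha> where \<mu>s: "\<And>k n. \<mu>s k n \<in> \<M>" and \<alpha>: "\<And>k n. 0 \<le> \<alpha> k n" "\<And>k. \<alpha> k sums 1"
    and mk_eq: "\<And>k. mk k = (\<lambda>A. \<Sum>n. \<alpha> k n * norm_var (\<mu>s k n) A)"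
    by (rule convA_seq_representation[where mk = mk, OF mk]) blast
  have ba: "\<mu>s k n \<in> ba \<Omega> M" for k n using \<mu>s \<M> by auto
  define \<alpha>' where "\<alpha>' j = c (fst (prod_decode j)) * \<alpha> (fst (prod_decode j)) (snd (prod_decode j))" for j
  define \<mu>' where "\<mu>' j = \<mu>s (fst (prod_decode j)) (snd (prod_decode j))" for j
  show ?thesis unfolding convA_iff
  proof (intro exI conjI)
    show "\<forall>n. \<mu>' n \<in> \<M>" using \<mu>s by (simp add: \<mu>'_def)
    show "\<forall>n. 0 \<le> \<alpha>' n" using \<alpha> c by (simp add: \<alpha>'_def)
    have "(\<lambda>j. (\<lambda>p. c (fst p) * \<alpha> (fst p) (snd p)) (prod_decode j)) sums 1"
      by (rule nonneg_double_series_sums[where a = c]) (use \<alpha> c sums_mult[OF \<alpha>(2)] in auto)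
    then show "\<alpha>' sums 1" unfolding \<alpha>'_def[abs_def] by simp
    show "(\<lambda>A. \<Sum>k. c k * mk k A) = (\<lambda>A. \<Sum>n. \<alpha>' n * norm_var (\<mu>' n) A)"
    proof
      fix A
      have row: "(\<lambda>n. c k * \<alpha> k n * norm_var (\<mu>s k n) A) sums (c k * mk k A)" for k
        using sums_mult[OF summable_sums[OF convex_series_bounds(1)[of "\<alpha> k" "\<lambda>n. norm_var (\<mu>s k n) A",
            OF \<alpha>(1,2) norm_var_nonneg[OF ba] norm_var_le_1[OF ba]]], of "c k"] mk_eq[of k]
        by (simp add: mult.assoc)
      have "summable (\<lambda>k. c k * mk k A)"
        by (rule convex_series_bounds(1)[OF c]) (use convA_props[OF mk] in auto)
      then have "(\<lambda>j. (\<lambda>p. c (fst p) * \<alpha> (fst p) (snd p) * norm_var (\<mu>s (fst p) (snd p)) A)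
          (prod_decode j)) sums (\<Sum>k. c k * mk k A)"
        by (intro nonneg_double_series_sums[OF _ _ summable_sums])
           (use \<alpha> c norm_var_nonneg[OF ba] row in auto)
      then show "(\<Sum>k. c k * mk k A) = (\<Sum>n. \<alpha>' n * norm_var (\<mu>' n) A)"
        by (simp add: \<alpha>'_def \<mu>'_def sums_iff)
    qed
  qed
qed

end

end

section \<open>The inclusion L(\<M>) \<subseteq> perp (perp \<M>)\<close>

context algebra
begin

definition singular_to :: "('a set \<Rightarrow> real) \<Rightarrow> ('a set \<Rightarrow> real) \<Rightarrow> bool" where
  "singular_to l f \<longleftrightarrow> (\<forall>\<epsilon>>0. \<exists>A\<in>M. tv M l A + f (\<Omega> - A) < \<epsilon>)"

context
  fixes l assumes l: "l \<in> ba \<Omega> M"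
begin

lemma singular_to_scaled_norm_var:
  assumes \<mu>: "\<mu> \<in> ba \<Omega> M" and sing: "singular \<Omega> M l \<mu>" and c: "0 \<le> c"
  shows "singular_to l (\<lambda>B. c * norm_var \<mu> B)"
  unfolding singular_to_def
proof (intro allI impI)
  fix \<epsilon> :: real assume "\<epsilon> > 0"
  then have "\<epsilon> / (c + 1) > 0" using c by simp
  then obtain A where A: "A \<in> M" "tv M l A + tv M \<mu> (\<Omega> - A) < \<epsilon> / (c + 1)"
    using sing unfolding singular_def by blast
  have l0: "0 \<le> tv M l A" and \<mu>0: "0 \<le> tv M \<mu> (\<Omega> - A)"
    using tv_nonneg[OF ba_additive ba_bounded] l \<mu> by auto
  have "c * norm_var \<mu> (\<Omega> - A) \<le> c * tv M \<mu> (\<Omega> - A)"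
    using norm_var_le_tv[OF \<mu>] c by (simp add: mult_left_mono)
  then have "tv M l A + c * norm_var \<mu> (\<Omega> - A) \<le> (c + 1) * (tv M l A + tv M \<mu> (\<Omega> - A))"
    using l0 \<mu>0 c by (simp add: algebra_simps add_increasing)
  also have "\<dots> < (c + 1) * (\<epsilon> / (c + 1))" using A(2) c by (intro mult_strict_left_mono) auto
  also have "\<dots> = \<epsilon>" using c by simp
  finally show "\<exists>A\<in>M. tv M l A + c * norm_var \<mu> (\<Omega> - A) < \<epsilon>" using A(1) by blast
qed

text \<open>One-sided singularity is preserved under sums of monotone set functions: intersect the
  two witnessing complements.\<close>

lemma singular_to_add:
  assumes s1: "singular_to l f1" and s2: "singular_to l f2"
    and m1: "\<And>A B. A \<in> M \<Longrightarrow> B \<in> M \<Longrightarrow> B \<subseteq> A \<Longrightarrow> f1 B \<le> f1 A"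
    and m2: "\<And>A B. A \<in> M \<Longrightarrow> B \<in> M \<Longrightarrow> B \<subseteq> A \<Longrightarrow> f2 B \<le> f2 A"
  shows "singular_to l (\<lambda>B. f1 B + f2 B)"
  unfolding singular_to_def
proof (intro allI impI)
  fix \<epsilon> :: real assume "\<epsilon> > 0"
  then obtain A1 A2 where A1: "A1 \<in> M" "tv M l A1 + f1 (\<Omega> - A1) < \<epsilon>/2"
    and A2: "A2 \<in> M" "tv M l A2 + f2 (\<Omega> - A2) < \<epsilon>/2"
    using s1 s2 unfolding singular_to_def by (meson half_gt_zero)
  have "tv M l (A1 \<union> A2) \<le> tv M l A1 + tv M l A2"
    by (rule tv_subadditive[OF ba_additive[OF l] ba_bounded[OF l] A1(1) A2(1)])
  moreover have "f1 (\<Omega> - (A1 \<union> A2)) \<le> f1 (\<Omega> - A1)" by (rule m1) (use A1 A2 in auto)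
  moreover have "f2 (\<Omega> - (A1 \<union> A2)) \<le> f2 (\<Omega> - A2)" by (rule m2) (use A1 A2 in auto)
  ultimately have "tv M l (A1 \<union> A2) + (f1 (\<Omega> - (A1 \<union> A2)) + f2 (\<Omega> - (A1 \<union> A2))) < \<epsilon>"
    using A1 A2 by simp
  then show "\<exists>A\<in>M. tv M l A + (f1 (\<Omega> - A) + f2 (\<Omega> - A)) < \<epsilon>" using A1 A2 by blast
qed

text \<open>Singularity to every member of \<M> passes to every element of A(\<M>): by induction it
  holds for the partial sums, and the tail of the convex series is uniformly small.\<close>

lemma singular_to_convA:
  assumes \<M>: "\<M> \<subseteq> ba \<Omega> M" and m: "m \<in> convA \<Omega> M \<M>"
    and sing: "\<And>\<mu>. \<mu> \<in> \<M> \<Longrightarrow> singular \<Omega> M l \<mu>"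
  shows "singular_to l m"
proof -
  obtain \<mu> \<alpha> where \<mu>: "\<And>n. \<mu> n \<in> \<M>" and \<alpha>: "\<And>n. 0 \<le> \<alpha> n" "\<alpha> sums 1"
    and m_eq: "m = (\<lambda>A. \<Sum>n. \<alpha> n * norm_var (\<mu> n) A)"
    using m unfolding convA_iff by blast
  have ba: "\<mu> n \<in> ba \<Omega> M" for n using \<mu> \<M> by auto
  define S where "S N B = (\<Sum>n<N. \<alpha> n * norm_var (\<mu> n) B)" for N B
  have S_mono: "S N B \<le> S N A" if "A \<in> M" "B \<in> M" "B \<subseteq> A" for N A B
    unfolding S_def by (intro sum_mono mult_left_mono norm_var_mono[OF ba that]) (use \<alpha> in auto)
  have S_sing: "singular_to l (S N)" for N
  proof (induction N)
    case 0
    show ?case unfolding singular_to_def S_def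
      using tv_outside[of "{}" l] additive_empty[OF tv_additive[OF ba_additive[OF l] ba_bounded[OF l]]]
      by (auto intro!: bexI[of _ "{}"])
  next
    case (Suc N)
    have "singular_to l (\<lambda>B. S N B + \<alpha> N * norm_var (\<mu> N) B)"
      by (rule singular_to_add[OF Suc singular_to_scaled_norm_var[OF ba sing[OF \<mu>] \<alpha>(1)]])
         (use S_mono norm_var_mono[OF ba] \<alpha>(1) in \<open>auto intro: mult_left_mono\<close>)
    then show ?case unfolding S_def by simp
  qed
  have tail: "m B \<le> 1 - (\<Sum>n<N. \<alpha> n) + S N B" for N B
    using convex_series_bounds(5)[of \<alpha> "\<lambda>n. norm_var (\<mu> n) B", OF \<alpha> norm_var_nonneg[OF ba]
        norm_var_le_1[OF ba]] unfolding m_eq S_def .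
  show ?thesis unfolding singular_to_def
  proof (intro allI impI)
    fix \<epsilon> :: real assume e: "\<epsilon> > 0"
    have "(\<lambda>N. \<Sum>n<N. \<alpha> n) \<longlonglongrightarrow> 1" using \<alpha>(2) by (simp add: sums_def)
    then obtain N where N: "\<bar>(\<Sum>n<N. \<alpha> n) - 1\<bar> < \<epsilon>/2"
      using e unfolding LIMSEQ_iff by (metis half_gt_zero order_refl real_norm_def)
    obtain A where A: "A \<in> M" "tv M l A + S N (\<Omega> - A) < \<epsilon>/2"
      using S_sing[of N] e unfolding singular_to_def by (meson half_gt_zero)
    then have "tv M l A + m (\<Omega> - A) < \<epsilon>" using tail[of "\<Omega> - A" N] N by linarith
    then show "\<exists>A\<in>M. tv M l A + m (\<Omega> - A) < \<epsilon>" using A(1) by blast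
  qed
qed

end

lemma Lset_singular_to_perp:
  assumes \<M>: "\<M> \<subseteq> ba \<Omega> M" and \<nu>: "\<nu> \<in> Lset \<Omega> M \<M>" and l: "l \<in> perp \<Omega> M \<M>"
  shows "singular \<Omega> M \<nu> l"
  unfolding singular_def
proof (intro allI impI)
  fix \<epsilon> :: real assume e: "\<epsilon> > 0"
  obtain m where m: "m \<in> convA \<Omega> M \<M>" and ac: "abs_cont M \<nu> m"
    using \<nu> by (auto simp: Lset_def)
  have lba: "l \<in> ba \<Omega> M" and l_sing: "\<And>\<mu>. \<mu> \<in> \<M> \<Longrightarrow> singular \<Omega> M l \<mu>"
    using l by (auto simp: perp_def)
  obtain \<delta> where \<delta>: "\<delta> > 0" "\<And>A. A \<in> M \<Longrightarrow> tv M m A < \<delta> \<Longrightarrow> tv M \<nu> A < \<epsilon>/2"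
    using ac e unfolding abs_cont_def by (meson half_gt_zero)
  obtain A where A: "A \<in> M" "tv M l A + m (\<Omega> - A) < min \<delta> (\<epsilon>/2)"
    using singular_to_convA[OF lba \<M> m l_sing] \<delta> e unfolding singular_to_def
    by (meson half_gt_zero min_less_iff_conj)
  have C: "\<Omega> - A \<in> M" using A by auto
  have l0: "0 \<le> tv M l A" using tv_nonneg[OF ba_additive[OF lba] ba_bounded[OF lba]] .
  have "tv M m (\<Omega> - A) < \<delta>" using A convA_props(4)[OF \<M> m C] l0 by simp
  then have "tv M \<nu> (\<Omega> - A) < \<epsilon>/2" using \<delta>(2)[OF C] by simp
  moreover have "tv M l A < \<epsilon>/2" using A convA_props(2)[OF \<M> m, of "\<Omega> - A"] by simp
  moreover have "\<Omega> - (\<Omega> - A) = A" using A sets_into_space by auto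
  ultimately show "\<exists>A\<in>M. tv M \<nu> A + tv M l (\<Omega> - A) < \<epsilon>" using C by (intro bexI[of _ "\<Omega> - A"]) auto
qed

end

section \<open>The part of v concentrated on m-small sets\<close>

text \<open>sup_small M v m d A is the largest v-mass of a subset of A of m-mass below d; its limit
  as d tends to 0 is the part of v that escapes absolute continuity with respect to m.\<close>

definition sup_small :: "'a set set \<Rightarrow> ('a set \<Rightarrow> real) \<Rightarrow> ('a set \<Rightarrow> real) \<Rightarrow> real \<Rightarrow> 'a set \<Rightarrow> real" where
  "sup_small M v m d A = (SUP B\<in>{B\<in>M. B \<subseteq> A \<and> m B < d}. v B)"

definition sing_part :: "'a set set \<Rightarrow> ('a set \<Rightarrow> real) \<Rightarrow> ('a set \<Rightarrow> real) \<Rightarrow> 'a set \<Rightarrow> real" where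
  "sing_part M v m A = (if A \<in> M then (INF d\<in>{0<..}. sup_small M v m d A) else 0)"

text \<open>The standing assumptions: v is a bounded nonnegative additive function (later |\<nu>|)
  and m a nonnegative additive control function (later an element of A(\<M>)).\<close>

locale sing_part_data = algebra +
  fixes v m :: "'a set \<Rightarrow> real"
  assumes v_additive: "additive M v" and v_bounded: "bounded_on M v" and v_nonneg: "\<And>A. 0 \<le> v A"
    and m_additive: "additive M m" and m_nonneg: "\<And>A. 0 \<le> m A"
begin

lemma sup_small_upper: "B \<in> M \<Longrightarrow> B \<subseteq> A \<Longrightarrow> m B < d \<Longrightarrow> v B \<le> sup_small M v m d A"
  unfolding sup_small_def by (rule cSUP_upper[OF _ bounded_on_bdd_above[OF v_bounded]]) auto

lemma sup_small_least:
  "0 < d \<Longrightarrow> (\<And>B. B \<in> M \<Longrightarrow> B \<subseteq> A \<Longrightarrow> m B < d \<Longrightarrow> v B \<le> c) \<Longrightarrow> sup_small M v m d A \<le> c"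
  unfolding sup_small_def by (rule cSUP_least) (use additive_empty[OF m_additive] in auto)

lemma sup_small_nonneg: "0 < d \<Longrightarrow> 0 \<le> sup_small M v m d A"
  using sup_small_upper[of "{}" A d] additive_empty[OF m_additive] additive_empty[OF v_additive]
  by auto

lemma sup_small_mono: "0 < d1 \<Longrightarrow> d1 \<le> d2 \<Longrightarrow> sup_small M v m d1 A \<le> sup_small M v m d2 A"
  by (rule sup_small_least) (auto intro: sup_small_upper)

lemma sup_small_subadditive:
  assumes A: "A1 \<in> M" "A2 \<in> M" "A1 \<inter> A2 = {}" and d: "0 < d"
  shows "sup_small M v m d (A1 \<union> A2) \<le> sup_small M v m d A1 + sup_small M v m d A2"
proof (rule sup_small_least[OF d])
  fix B assume B: "B \<in> M" "B \<subseteq> A1 \<union> A2" "m B < d"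
  have parts: "B \<inter> A1 \<in> M" "B \<inter> A2 \<in> M" "B \<inter> A1 \<subseteq> B" "B \<inter> A2 \<subseteq> B" using A B by auto
  have "B = (B \<inter> A1) \<union> (B \<inter> A2)" using B by auto
  then have "v B = v (B \<inter> A1) + v (B \<inter> A2)"
    using additiveD[OF v_additive, of "B \<inter> A1" "B \<inter> A2"] A parts by auto
  also have "\<dots> \<le> sup_small M v m d A1 + sup_small M v m d A2"
    using additive_mono[OF m_additive _ B(1)] m_nonneg B(3) parts
    by (intro add_mono sup_small_upper) fastforce+
  finally show "v B \<le> sup_small M v m d A1 + sup_small M v m d A2" .
qed

lemma sup_small_superadditive:
  assumes A: "A1 \<in> M" "A2 \<in> M" "A1 \<inter> A2 = {}" and d: "0 < d1" "0 < d2"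
  shows "sup_small M v m d1 A1 + sup_small M v m d2 A2 \<le> sup_small M v m (d1 + d2) (A1 \<union> A2)"
proof -
  have "sup_small M v m d1 A1 \<le> sup_small M v m (d1 + d2) (A1 \<union> A2) - sup_small M v m d2 A2"
  proof (rule sup_small_least[OF d(1)])
    fix B1 assume B1: "B1 \<in> M" "B1 \<subseteq> A1" "m B1 < d1"
    have "sup_small M v m d2 A2 \<le> sup_small M v m (d1 + d2) (A1 \<union> A2) - v B1"
    proof (rule sup_small_least[OF d(2)])
      fix B2 assume B2: "B2 \<in> M" "B2 \<subseteq> A2" "m B2 < d2"
      have dj: "B1 \<inter> B2 = {}" using A B1 B2 by auto
      have "v B1 + v B2 = v (B1 \<union> B2)" using additiveD[OF v_additive dj B1(1) B2(1)] ..
      also have "\<dots> \<le> sup_small M v m (d1 + d2) (A1 \<union> A2)"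
        by (rule sup_small_upper) (use B1 B2 additiveD[OF m_additive dj B1(1) B2(1)] in auto)
      finally show "v B2 \<le> sup_small M v m (d1 + d2) (A1 \<union> A2) - v B1" by simp
    qed
    then show "v B1 \<le> sup_small M v m (d1 + d2) (A1 \<union> A2) - sup_small M v m d2 A2" by simp
  qed
  then show ?thesis by simp
qed

lemma sing_part_le_sup_small: "A \<in> M \<Longrightarrow> 0 < d \<Longrightarrow> sing_part M v m A \<le> sup_small M v m d A"
  unfolding sing_part_def by (auto intro!: cINF_lower simp: bdd_below_def intro: sup_small_nonneg)

lemma sing_part_greatest:
  "A \<in> M \<Longrightarrow> (\<And>d. 0 < d \<Longrightarrow> c \<le> sup_small M v m d A) \<Longrightarrow> c \<le> sing_part M v m A"
  unfolding sing_part_def by (auto intro!: cINF_greatest)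

lemma sing_part_approx:
  "A \<in> M \<Longrightarrow> 0 < \<epsilon> \<Longrightarrow> \<exists>d>0. sup_small M v m d A < sing_part M v m A + \<epsilon>"
  using sing_part_greatest[of A "sing_part M v m A + \<epsilon>"] by force

lemma sing_part_nonneg: "0 \<le> sing_part M v m A"
proof (cases "A \<in> M")
  case True then show ?thesis by (rule sing_part_greatest) (rule sup_small_nonneg)
qed (simp add: sing_part_def)

lemma sing_part_le: "A \<in> M \<Longrightarrow> sing_part M v m A \<le> v A"
  using sing_part_le_sup_small[of A 1]
    sup_small_least[of 1 A "v A"] additive_mono[OF v_additive] v_nonneg by force

text \<open>The singular part is finitely additive; both inequalities follow from the sub- and
  superadditivity of sup_small by letting the thresholds tend to 0.\<close>

lemma sing_part_additive: "additive M (sing_part M v m)"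
  unfolding additive_def
proof (intro ballI impI antisym)
  fix A1 A2 assume A: "A1 \<in> M" "A2 \<in> M" "A1 \<inter> A2 = {}"
  have U: "A1 \<union> A2 \<in> M" using A by auto
  show "sing_part M v m (A1 \<union> A2) \<le> sing_part M v m A1 + sing_part M v m A2"
  proof (rule field_le_epsilon)
    fix e :: real assume e: "0 < e"
    obtain d1 d2 where d1: "0 < d1" "sup_small M v m d1 A1 < sing_part M v m A1 + e/2"
      and d2: "0 < d2" "sup_small M v m d2 A2 < sing_part M v m A2 + e/2"
      using sing_part_approx[OF A(1), of "e/2"] sing_part_approx[OF A(2), of "e/2"] e by auto
    define d where "d = min d1 d2"
    have "sing_part M v m (A1 \<union> A2) \<le> sup_small M v m d (A1 \<union> A2)"
      using sing_part_le_sup_small[OF U] d1 d2 by (simp add: d_def)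
    also have "\<dots> \<le> sup_small M v m d A1 + sup_small M v m d A2"
      using sup_small_subadditive[OF A] d1 d2 by (simp add: d_def)
    also have "\<dots> \<le> sup_small M v m d1 A1 + sup_small M v m d2 A2"
      using sup_small_mono d1 d2 by (intro add_mono) (auto simp: d_def)
    finally show "sing_part M v m (A1 \<union> A2) \<le> sing_part M v m A1 + sing_part M v m A2 + e"
      using d1 d2 by simp
  qed
  show "sing_part M v m A1 + sing_part M v m A2 \<le> sing_part M v m (A1 \<union> A2)"
  proof (rule field_le_epsilon)
    fix e :: real assume e: "0 < e"
    obtain d where d: "0 < d" "sup_small M v m d (A1 \<union> A2) < sing_part M v m (A1 \<union> A2) + e"
      using sing_part_approx[OF U e] by auto
    have "sing_part M v m A1 + sing_part M v m A2 \<le> sup_small M v m (d/2) A1 + sup_small M v m (d/2) A2"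
      using sing_part_le_sup_small A d by (intro add_mono) auto
    also have "\<dots> \<le> sup_small M v m (d/2 + d/2) (A1 \<union> A2)"
      using sup_small_superadditive[OF A, of "d/2" "d/2"] d by simp
    finally show "sing_part M v m A1 + sing_part M v m A2 \<le> sing_part M v m (A1 \<union> A2) + e"
      using d by simp
  qed
qed

lemma sing_part_ba: "sing_part M v m \<in> ba \<Omega> M"
  unfolding ba_iff
proof (intro conjI sing_part_additive allI impI)
  obtain c where "\<And>A. A \<in> M \<Longrightarrow> \<bar>v A\<bar> \<le> c" using bounded_onE[OF v_bounded] by blast
  then show "bounded_on M (sing_part M v m)" unfolding bounded_on_def
    using sing_part_le sing_part_nonneg by (intro exI[of _ c]) (force dest: abs_le_D1)
qed (simp add: sing_part_def)

lemma tv_sing_part: "tv M (sing_part M v m) A = sing_part M v m A"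
proof (cases "A \<in> M")
  case True
  then show ?thesis
    using tv_nonneg_fun[OF sing_part_additive _ sing_part_nonneg] sing_part_ba by (simp add: ba_iff)
qed (simp add: tv_def sing_part_def)

lemma le_sing_part_on_small:
  assumes e: "0 < \<epsilon>"
  shows "\<exists>d>0. \<forall>B\<in>M. m B < d \<longrightarrow> v B \<le> sing_part M v m B + \<epsilon>"
proof -
  obtain d0 where d0: "0 < d0" "sup_small M v m d0 \<Omega> < sing_part M v m \<Omega> + \<epsilon>"
    using sing_part_approx[OF top e] by auto
  have "v B \<le> sing_part M v m B + \<epsilon>" if B: "B \<in> M" "m B < d0/2" for B
  proof -
    have C: "\<Omega> - B \<in> M" using B by auto
    have U: "B \<union> (\<Omega> - B) = \<Omega>" using B sets_into_space by auto
    have "v B \<le> sup_small M v m (d0/2) B" using sup_small_upper[OF B(1) _ B(2)] by simp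
    moreover have "sing_part M v m (\<Omega> - B) \<le> sup_small M v m (d0/2) (\<Omega> - B)"
      using sing_part_le_sup_small[OF C] d0 by simp
    moreover have "sup_small M v m (d0/2) B + sup_small M v m (d0/2) (\<Omega> - B) \<le> sup_small M v m d0 \<Omega>"
      using sup_small_superadditive[OF B(1) C, of "d0/2" "d0/2"] d0 U by auto
    moreover have "sing_part M v m \<Omega> = sing_part M v m B + sing_part M v m (\<Omega> - B)"
      using additive_compl[OF sing_part_additive B(1)] .
    ultimately show ?thesis using d0 by linarith
  qed
  then show ?thesis using d0 by (intro exI[of _ "d0/2"]) auto
qed

lemma abs_cont_if_sing_part_zero:
  assumes z: "sing_part M v m \<Omega> = 0" and e: "0 < \<epsilon>"
  shows "\<exists>d>0. \<forall>A\<in>M. m A < d \<longrightarrow> v A < \<epsilon>"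
proof -
  obtain d where d: "0 < d" "sup_small M v m d \<Omega> < \<epsilon>" using sing_part_approx[OF top e] z by auto
  have "v A < \<epsilon>" if "A \<in> M" "m A < d" for A
    using sup_small_upper[of A \<Omega> d] that sets_into_space d by force
  then show ?thesis using d by blast
qed

lemma sing_part_zero_if_singular:
  assumes sing: "\<And>\<epsilon>. 0 < \<epsilon> \<Longrightarrow> \<exists>A\<in>M. v A + sing_part M v m (\<Omega> - A) < \<epsilon>"
  shows "sing_part M v m \<Omega> = 0"
proof (rule antisym[OF field_le_epsilon sing_part_nonneg])
  fix e :: real assume "0 < e"
  then obtain A where A: "A \<in> M" "v A + sing_part M v m (\<Omega> - A) < e" using sing by blast
  have "sing_part M v m \<Omega> = sing_part M v m A + sing_part M v m (\<Omega> - A)"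
    using additive_compl[OF sing_part_additive A(1)] .
  then show "sing_part M v m \<Omega> \<le> 0 + e" using sing_part_le[OF A(1)] A(2) by simp
qed

end

context algebra
begin

lemma sing_part_dataI:
  "additive M v \<Longrightarrow> bounded_on M v \<Longrightarrow> (\<And>A. 0 \<le> v A) \<Longrightarrow> additive M m \<Longrightarrow> (\<And>A. 0 \<le> m A)
    \<Longrightarrow> sing_part_data \<Omega> M v m"
  by (intro sing_part_data.intro sing_part_data_axioms.intro) (unfold_locales, auto)

end

section \<open>Minimising the singular part over A(\<M>)\<close>

context algebra
begin

lemma sing_part_antimono:
  assumes R1: "sing_part_data \<Omega> M v m1" and R2: "sing_part_data \<Omega> M v m2"
    and c: "0 < c" and le: "\<And>A. A \<in> M \<Longrightarrow> c * m1 A \<le> m2 A"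
  shows "sing_part M v m2 \<Omega> \<le> sing_part M v m1 \<Omega>"
proof -
  interpret R1: sing_part_data \<Omega> M v m1 by (rule R1)
  interpret R2: sing_part_data \<Omega> M v m2 by (rule R2)
  show ?thesis
  proof (rule R1.sing_part_greatest[OF top])
    fix d :: real assume d: "0 < d"
    have "sing_part M v m2 \<Omega> \<le> sup_small M v m2 (c * d) \<Omega>"
      using R2.sing_part_le_sup_small[OF top] c d by simp
    also have "\<dots> \<le> sup_small M v m1 d \<Omega>"
    proof (rule R2.sup_small_least)
      fix B assume B: "B \<in> M" "B \<subseteq> \<Omega>" "m2 B < c * d"
      then have "c * m1 B < c * d" using le[OF B(1)] by simp
      then have "m1 B < d" using c by simp
      then show "v B \<le> sup_small M v m1 d \<Omega>" using R1.sup_small_upper[OF B(1,2)] by simp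
    qed (use c d in simp)
    finally show "sing_part M v m2 \<Omega> \<le> sup_small M v m1 d \<Omega>" .
  qed
qed

lemma sing_part_midpoint_decrease:
  assumes R: "sing_part_data \<Omega> M v m" and R2: "sing_part_data \<Omega> M v m2"
    and \<mu>: "\<And>A. 0 \<le> \<mu> A" and m2: "\<And>A. m2 A = (m A + \<mu> A) / 2"
    and e0: "\<And>A. A \<in> M \<Longrightarrow> \<epsilon>0 \<le> sing_part M v m A + \<mu> (\<Omega> - A)"
  shows "sing_part M v m2 \<Omega> \<le> sing_part M v m \<Omega> - \<epsilon>0"
proof (rule field_le_epsilon)
  interpret R: sing_part_data \<Omega> M v m by (rule R)
  interpret R2: sing_part_data \<Omega> M v m2 by (rule R2)
  fix e :: real assume "0 < e"
  then have \<eta>: "0 < e/2" by simp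
  obtain d where d: "0 < d" "\<And>B. B \<in> M \<Longrightarrow> m B < d \<Longrightarrow> v B \<le> sing_part M v m B + e/2"
    using R.le_sing_part_on_small[OF \<eta>] by blast
  define d1 where "d1 = min d (e/2)"
  have d1: "0 < d1" using d \<eta> by (simp add: d1_def)
  have "sing_part M v m2 \<Omega> \<le> sup_small M v m2 (d1/2) \<Omega>"
    using R2.sing_part_le_sup_small[OF top] d1 by simp
  also have "\<dots> \<le> sing_part M v m \<Omega> - \<epsilon>0 + e"
  proof (rule R2.sup_small_least)
    fix B assume B: "B \<in> M" "B \<subseteq> \<Omega>" "m2 B < d1/2"
    have small: "m B < d" "\<mu> B < e/2" using B(3) m2[of B] R.m_nonneg[of B] \<mu>[of B]
      by (auto simp: d1_def)
    have C: "\<Omega> - B \<in> M" and CC: "\<Omega> - (\<Omega> - B) = B" using B by auto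
    have "sing_part M v m \<Omega> = sing_part M v m B + sing_part M v m (\<Omega> - B)"
      using additive_compl[OF R.sing_part_additive B(1)] .
    moreover have "\<epsilon>0 \<le> sing_part M v m (\<Omega> - B) + \<mu> B" using e0[OF C] CC by simp
    moreover have "v B \<le> sing_part M v m B + e/2" using d(2)[OF B(1) small(1)] .
    ultimately show "v B \<le> sing_part M v m \<Omega> - \<epsilon>0 + e" using small by linarith
  qed (use d1 in simp)
  finally show "sing_part M v m2 \<Omega> \<le> sing_part M v m \<Omega> - \<epsilon>0 + e" .
qed

context
  fixes \<M> v
  assumes \<M>: "\<M> \<subseteq> ba \<Omega> M"
    and v: "additive M v" "bounded_on M v" "\<And>A. 0 \<le> v A"
begin

lemma convA_sing_part_data: "m \<in> convA \<Omega> M \<M> \<Longrightarrow> sing_part_data \<Omega> M v m"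
  using sing_part_dataI[OF v] convA_props[OF \<M>] by blast

text \<open>Since A(\<M>) is closed under countable convex combinations, the infimum of \<rho>(\<Omega>) over
  A(\<M>) is attained: combine near-minimisers with weights 2^-(k+1).\<close>

lemma convA_minimizer:
  assumes ne: "\<M> \<noteq> {}"
  obtains m where "m \<in> convA \<Omega> M \<M>"
    "\<And>m'. m' \<in> convA \<Omega> M \<M> \<Longrightarrow> sing_part M v m \<Omega> \<le> sing_part M v m' \<Omega>"
proof -
  define s where "s m = sing_part M v m \<Omega>" for m
  define S where "S = s ` convA \<Omega> M \<M>"
  have S_ne: "S \<noteq> {}" unfolding S_def using convA_single[OF \<M>] ne by blast
  have S_bdd: "bdd_below S" unfolding S_def bdd_below_def s_def
    using sing_part_data.sing_part_nonneg[OF convA_sing_part_data] by blast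
  have "\<exists>m. m \<in> convA \<Omega> M \<M> \<and> s m < Inf S + inverse (real (Suc k))" for k
  proof -
    have "Inf S < Inf S + inverse (real (Suc k))" by simp
    from cInf_lessD[OF S_ne this] show ?thesis unfolding S_def by blast
  qed
  then have "\<forall>k. \<exists>m. m \<in> convA \<Omega> M \<M> \<and> s m < Inf S + inverse (real (Suc k))" by blast
  from choice[OF this] obtain mk where mk: "\<And>k. mk k \<in> convA \<Omega> M \<M>"
    "\<And>k. s (mk k) < Inf S + inverse (real (Suc k))"
    by blast
  define c where "c k = (1/2::real) ^ Suc k" for k
  have c: "\<And>k. 0 \<le> c k" "c sums 1" using power_half_series unfolding c_def[abs_def] by auto
  define m where "m A = (\<Sum>k. c k * mk k A)" for A
  have m: "m \<in> convA \<Omega> M \<M>" unfolding m_def[abs_def] by (rule convA_countable[OF \<M> mk(1) c])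
  have m_le_mk: "s m \<le> s (mk k)" for k
    unfolding s_def
  proof (rule sing_part_antimono[OF convA_sing_part_data[OF mk(1)] convA_sing_part_data[OF m]])
    show "0 < c k" by (simp add: c_def)
    show "c k * mk k A \<le> m A" for A
      unfolding m_def by (rule convex_series_bounds(4)[OF c]) (use convA_props[OF \<M> mk(1)] in auto)
  qed
  have "s m \<le> Inf S"
  proof (rule ccontr)
    assume "\<not> s m \<le> Inf S"
    then obtain k where "inverse (real (Suc k)) < s m - Inf S"
      using reals_Archimedean[of "s m - Inf S"] by auto
    with m_le_mk[of k] mk(2)[of k] show False by simp
  qed
  moreover have "Inf S \<le> s m'" if "m' \<in> convA \<Omega> M \<M>" for m'
    using cInf_lower[OF _ S_bdd] that unfolding S_def by blast
  ultimately show ?thesis using that[OF m] unfolding s_def by force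
qed

text \<open>At a minimiser m the singular part \<rho> of v is singular to every \<mu> \<in> \<M>: otherwise
  averaging m with the normalised variation of \<mu> would decrease \<rho>(\<Omega>).\<close>

lemma minimizer_sing_part_singular:
  assumes m: "m \<in> convA \<Omega> M \<M>"
    and min: "\<And>m'. m' \<in> convA \<Omega> M \<M> \<Longrightarrow> sing_part M v m \<Omega> \<le> sing_part M v m' \<Omega>"
    and \<mu>: "\<mu> \<in> \<M>"
  shows "singular \<Omega> M (sing_part M v m) \<mu>"
proof (rule ccontr)
  interpret R: sing_part_data \<Omega> M v m by (rule convA_sing_part_data[OF m])
  assume "\<not> singular \<Omega> M (sing_part M v m) \<mu>"
  then obtain \<epsilon> where \<epsilon>: "0 < \<epsilon>"
    and far: "\<And>A. A \<in> M \<Longrightarrow> \<epsilon> \<le> sing_part M v m A + tv M \<mu> (\<Omega> - A)"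
    unfolding singular_def by (auto simp: not_less R.tv_sing_part)
  have \<mu>_ba: "\<mu> \<in> ba \<Omega> M" using \<mu> \<M> by auto
  define K where "K = max 1 (ba_norm \<Omega> M \<mu>)"
  have K: "1 \<le> K" by (simp add: K_def)
  have e0: "\<epsilon> / K \<le> sing_part M v m A + norm_var \<mu> (\<Omega> - A)" if A: "A \<in> M" for A
  proof -
    have "\<epsilon> / K \<le> (sing_part M v m A + tv M \<mu> (\<Omega> - A)) / K"
      using far[OF A] K by (simp add: divide_right_mono)
    also have "\<dots> = sing_part M v m A / K + norm_var \<mu> (\<Omega> - A)"
      by (simp add: norm_var_def K_def add_divide_distrib)
    also have "sing_part M v m A / K \<le> sing_part M v m A"
      using R.sing_part_nonneg[of A] K by (simp add: divide_le_eq mult_le_cancel_left1)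
    finally show ?thesis by simp
  qed
  define m2 where "m2 A = (m A + norm_var \<mu> A) / 2" for A
  have m2: "m2 \<in> convA \<Omega> M \<M>" unfolding m2_def[abs_def] by (rule convA_midpoint[OF \<M> m \<mu>])
  have "sing_part M v m2 \<Omega> \<le> sing_part M v m \<Omega> - \<epsilon> / K"
    by (rule sing_part_midpoint_decrease[OF _ convA_sing_part_data[OF m2] norm_var_nonneg[OF \<mu>_ba]
          m2_def e0]) (rule convA_sing_part_data[OF m])
  moreover have "0 < \<epsilon> / K" using \<epsilon> K by simp
  ultimately show False using min[OF m2] by simp
qed

end

section \<open>The inclusion perp (perp \<M>) \<subseteq> L(\<M>)\<close>

text \<open>With v = |\<nu>| and m a minimiser: the singular part \<rho> lies in perp \<M>, so \<nu> \<perp> \<rho>, which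
  forces \<rho> = 0, and then \<nu> \<ll> m.\<close>

lemma perp_perp_subset_Lset:
  assumes \<M>: "\<M> \<subseteq> ba \<Omega> M" "\<M> \<noteq> {}" and \<nu>: "\<nu> \<in> perp \<Omega> M (perp \<Omega> M \<M>)"
  shows "\<nu> \<in> Lset \<Omega> M \<M>"
proof -
  have \<nu>_ba: "\<nu> \<in> ba \<Omega> M" and \<nu>_sing: "\<And>l. l \<in> perp \<Omega> M \<M> \<Longrightarrow> singular \<Omega> M \<nu> l"
    using \<nu> by (auto simp: perp_def)
  define v where "v = tv M \<nu>"
  note tv_props = tv_additive tv_bounded tv_nonneg
  have v: "additive M v" "bounded_on M v" "\<And>A. 0 \<le> v A"
    unfolding v_def using tv_props[OF ba_additive[OF \<nu>_ba] ba_bounded[OF \<nu>_ba]] by auto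
  obtain m where m: "m \<in> convA \<Omega> M \<M>"
    and min: "\<And>m'. m' \<in> convA \<Omega> M \<M> \<Longrightarrow> sing_part M v m \<Omega> \<le> sing_part M v m' \<Omega>"
    using convA_minimizer[OF \<M>(1) v \<M>(2)] by blast
  interpret R: sing_part_data \<Omega> M v m by (rule convA_sing_part_data[OF \<M>(1) v m])
  have "sing_part M v m \<in> perp \<Omega> M \<M>"
    unfolding perp_def using R.sing_part_ba minimizer_sing_part_singular[OF \<M>(1) v m min] by blast
  then have "singular \<Omega> M \<nu> (sing_part M v m)" by (rule \<nu>_sing)
  then have "sing_part M v m \<Omega> = 0"
    by (intro R.sing_part_zero_if_singular) (simp add: singular_def R.tv_sing_part flip: v_def)
  then have "abs_cont M \<nu> m"
    unfolding abs_cont_def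
  proof (intro allI impI)
    fix \<epsilon> :: real assume "sing_part M v m \<Omega> = 0" "0 < \<epsilon>"
    then obtain d where "0 < d" "\<forall>A\<in>M. m A < d \<longrightarrow> v A < \<epsilon>"
      using R.abs_cont_if_sing_part_zero by blast
    then show "\<exists>\<delta>>0. \<forall>A\<in>M. tv M m A < \<delta> \<longrightarrow> tv M \<nu> A < \<epsilon>"
      using convA_props(4)[OF \<M>(1) m] unfolding v_def by (intro exI[of _ d]) auto
  qed
  then show ?thesis unfolding Lset_def using \<nu>_ba m by blast
qed

end

theorem mainTheorem2:
  fixes \<Omega> :: "'a set" and \<A> :: "'a set set" and M :: "('a set \<Rightarrow> real) set"
  assumes "algebra \<Omega> \<A>"
    and "M \<subseteq> ba \<Omega> \<A>"
    and "M \<noteq> {}"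
  shows "Lset \<Omega> \<A> M = perp \<Omega> \<A> (perp \<Omega> \<A> M)"
proof
  interpret algebra \<Omega> \<A> by (rule assms(1))
  show "Lset \<Omega> \<A> M \<subseteq> perp \<Omega> \<A> (perp \<Omega> \<A> M)"
    using Lset_singular_to_perp[OF assms(2)] by (auto simp: perp_def Lset_def)
  show "perp \<Omega> \<A> (perp \<Omega> \<A> M) \<subseteq> Lset \<Omega> \<A> M"
    using perp_perp_subset_Lset[OF assms(2,3)] by blast
qed

end
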